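(* Let $X$ be a set and let $\Omega$ be a class of double sequences in $X$ (called convergent double sequences), each $x\in\Omega$ being associated with one or more elements of $X$ called limits of $x$, subject to the following conditions: (i) for every $p\in X$, the constant double sequence $x_{ij}=p$ belongs to $\Omega$ and has $p$ as a limit; (ii) if $x\in\Omega$ has limit $l$ and $z$ is obtained from $x$ by addition of finitely many terms, then $z\in\Omega$ and $z$ has limit $l$; (iii) if $A,B$ are nonempty disjoint subsets of $X$ and $x\in\Omega$ has all terms in $A\cup B$ and has limit $p$, then there is $y\in\Omega$ with limit $p$, whose range is a subset of the range of $x$, and whose terms lie either all in $A$ or all in $B$; (iv) if $x=\{x_{ij}\}\in\Omega$ has limit $p$ and $\{x_n\}_{n\in\mathbb{N}}$ is a sequence such that for each $n$, $x_n=x_{i_nj_n}$ for some $i_n>n$, $j_n>n$, then the double sequence $y_{ij}=x_i$ ($i,j\in\mathbb{N}$) belongs to $\Omega$ and has limit $p$. Call a subset $G\subseteq X$ open if and only if no member of $\Omega$ all of whose terms lie in $X\setminus G$ has a limit in $G$. Then the collection $\tau$ of such open sets is a topology on $X$.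
   Context: Addition of one term to a double sequence $\{x_{ij}\}$ in $X$: given $y\in X$, (a) row insertion: for fixed $m,n\in\mathbb{N}$, inserting $y$ between $x_{mn}$ and $x_{m,n+1}$ gives $\{y_{ij}\}$ with, for $i=m$: $y_{mj}=x_{mj}$ if $j\le n$, $y_{m,n+1}=y$, $y_{mj}=x_{m,j-1}$ if $j>n+1$; and $y_{ij}=x_{ij}$ for $i\ne m$. (b) column insertion: for fixed $m,n$, inserting $y$ between $x_{mn}$ and $x_{m+1,n}$ gives $\{y_{ij}\}$ with, for $j=n$: $y_{in}=x_{in}$ if $i\le m$, $y_{m+1,n}=y$, $y_{in}=x_{i-1,n}$ if $i>m+1$; and $y_{ij}=x_{ij}$ for $j\ne n$. Addition of finitely many terms $y_1,\dots,y_r$ means performing such single-term insertions successively, one for each $y_s$, $r$ times. The topology $\tau$ is called the convergence topology and $(X,\tau)$ a $d$-limit space. *)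

theory Defs
  imports "HOL-Analysis.Analysis"
begin

(* Double sequences in X are modelled as functions nat => nat => 'a, with X the
   universe of the type 'a. Indices start at 0 (a shift of the paper's 1-based indices). *)
type_synonym 'a dseq = "nat \<Rightarrow> nat \<Rightarrow> 'a"

definition row_insert :: "nat \<Rightarrow> nat \<Rightarrow> 'a \<Rightarrow> 'a dseq \<Rightarrow> 'a dseq" where
  "row_insert m n y x = (\<lambda>i j. if i = m then
       (if j \<le> n then x m j else if j = n + 1 then y else x m (j - 1))
     else x i j)"

definition col_insert :: "nat \<Rightarrow> nat \<Rightarrow> 'a \<Rightarrow> 'a dseq \<Rightarrow> 'a dseq" where
  "col_insert m n y x = (\<lambda>i j. if j = n then
       (if i \<le> m then x i n else if i = m + 1 then y else x (i - 1) n)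
     else x i j)"

inductive add_finite_terms :: "'a dseq \<Rightarrow> 'a dseq \<Rightarrow> bool" where
  refl: "add_finite_terms x x"
| row: "add_finite_terms x z \<Longrightarrow> add_finite_terms x (row_insert m n y z)"
| col: "add_finite_terms x z \<Longrightarrow> add_finite_terms x (col_insert m n y z)"

(* haslim x l : x belongs to Omega and l is a limit of x. Omega = {x. \<exists>l. haslim x l}. *)
definition d_open :: "('a dseq \<Rightarrow> 'a \<Rightarrow> bool) \<Rightarrow> 'a set \<Rightarrow> bool" where
  "d_open haslim G \<longleftrightarrow> \<not> (\<exists>x l. haslim x l \<and> (\<forall>i j. x i j \<in> UNIV - G) \<and> l \<in> G)"

end

theory Submission
  imports Defs
begin

text \<open>Openness of \<open>G\<close> forbids convergent sequences in \<open>X - G\<close> with a limit in \<open>G\<close>, so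
  unions of open sets and \<open>X\<close> itself are open for any notion of convergence. For an
  intersection \<open>S \<inter> T\<close>, the complement splits into \<open>X - S\<close> and \<open>S - T\<close>; condition (iii) pushes a
  bad sequence with limit in \<open>S \<inter> T\<close> entirely into one of the two parts, contradicting the
  openness of \<open>S\<close> or of \<open>T\<close>.\<close>

lemma d_open_UNIV: "d_open haslim UNIV"
  unfolding d_open_def by blast

lemma d_open_Union: "(\<And>S. S \<in> K \<Longrightarrow> d_open haslim S) \<Longrightarrow> d_open haslim (\<Union>K)"
  unfolding d_open_def by blast

lemma d_open_Int:
  assumes split: "\<And>A B x p. A \<noteq> {} \<Longrightarrow> B \<noteq> {} \<Longrightarrow> A \<inter> B = {} \<Longrightarrow>
      (\<forall>i j. x i j \<in> A \<union> B) \<Longrightarrow> haslim x p \<Longrightarrow>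
      \<exists>y. haslim y p \<and> ((\<forall>i j. y i j \<in> A) \<or> (\<forall>i j. y i j \<in> B))"
    and S: "d_open haslim S" and T: "d_open haslim T"
  shows "d_open haslim (S \<inter> T)"
  unfolding d_open_def
proof
  assume "\<exists>x l. haslim x l \<and> (\<forall>i j. x i j \<in> UNIV - S \<inter> T) \<and> l \<in> S \<inter> T"
  then obtain x l where x: "haslim x l" and outside: "\<forall>i j. x i j \<in> UNIV - S \<inter> T"
    and l: "l \<in> S" "l \<in> T"
    by blast
  let ?A = "UNIV - S" and ?B = "S - T"
  have not_in_A: "\<not> (\<forall>i j. y i j \<in> ?A)" if "haslim y l" for y
    using S that l unfolding d_open_def by blast
  have not_in_B: "\<not> (\<forall>i j. y i j \<in> ?B)" if "haslim y l" for y
    using T that l unfolding d_open_def by blast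
  have x_split: "\<forall>i j. x i j \<in> ?A \<union> ?B"
    using outside by blast
  show False
  proof (cases "?A = {} \<or> ?B = {}")
    case True
    then show ?thesis
      using not_in_A[OF x] not_in_B[OF x] x_split by blast
  next
    case False
    then obtain y where "haslim y l" "(\<forall>i j. y i j \<in> ?A) \<or> (\<forall>i j. y i j \<in> ?B)"
      using split[OF _ _ _ x_split x] by blast
    then show ?thesis
      using not_in_A not_in_B by blast
  qed
qed

theorem theorem3p3:
  fixes haslim :: "'a dseq \<Rightarrow> 'a \<Rightarrow> bool"
  assumes const: "\<And>p. haslim (\<lambda>i j. p) p"
    and add_terms: "\<And>x l z. haslim x l \<Longrightarrow> add_finite_terms x z \<Longrightarrow> haslim z l"
    and split: "\<And>A B x p. A \<noteq> {} \<Longrightarrow> B \<noteq> {} \<Longrightarrow> A \<inter> B = {} \<Longrightarrow>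
        (\<forall>i j. x i j \<in> A \<union> B) \<Longrightarrow> haslim x p \<Longrightarrow>
        \<exists>y. haslim y p \<and> (\<forall>i j. y i j \<in> {x a b | a b. True}) \<and>
            ((\<forall>i j. y i j \<in> A) \<or> (\<forall>i j. y i j \<in> B))"
    and diag: "\<And>x p s. haslim x p \<Longrightarrow> (\<forall>n. \<exists>i j. i > n \<and> j > n \<and> s n = x i j) \<Longrightarrow>
        haslim (\<lambda>i j. s i) p"
  shows "istopology (d_open haslim) \<and> d_open haslim UNIV"
proof -
  have split_one_side: "\<exists>y. haslim y p \<and> ((\<forall>i j. y i j \<in> A) \<or> (\<forall>i j. y i j \<in> B))"
    if "A \<noteq> {}" "B \<noteq> {}" "A \<inter> B = {}" "\<forall>i j. x i j \<in> A \<union> B" "haslim x p"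
    for A B x p
    using split[OF that] by auto
  have "istopology (d_open haslim)"
    unfolding istopology_def
  proof (intro conjI allI impI ballI)
    show "d_open haslim (S \<inter> T)" if "d_open haslim S" "d_open haslim T" for S T
      using d_open_Int[OF split_one_side that] .
    show "d_open haslim (\<Union>K)" if "\<forall>S\<in>K. d_open haslim S" for K
      using that by (simp add: d_open_Union)
  qed
  then show ?thesis
    using d_open_UNIV by blast
qed

end
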